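(* Let $T\ge0$ and let $a,k\in\{0,1,2,\dots\}$ with $a<k$. Then for every $b\in\mathbb N_+$ with $a<b\le k$, $$v(k-a-1,T)\le\alpha\,v(k-b,T)+(1-\alpha)\,v(k-a,T),\qquad \alpha=\frac{1}{b-a}.$$
   Context: Let $\lambda>0$ and let $N$ be a Poisson process with intensity $\lambda$, arrival times $0<\sigma_1<\sigma_2<\cdots$, and natural filtration $\mathcal F_t=\sigma(N_s:s\le t)$. Let $F:[0,\infty)\to[0,\infty)$ be strictly increasing and strictly convex with $F(0)=0$. For $k\in\{0,1,\dots\}$ let $\mathcal A_k$ be the set of $(\mathcal F_t)$-adapted, integer-valued, nonnegative, non-increasing processes $\xi$ with $\xi_0=k$ whose values change only at arrival times of $N$, and $v(k,T)=\inf_{\xi\in\mathcal A_k}\mathbb E[\sum_{i:\sigma_i\le T}F(\xi_{\sigma_i-}-\xi_{\sigma_i})+F(\xi_T)]$ (so $v(0,T)=0$). *)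

theory Defs
  imports "HOL-Probability.Probability"
begin

definition poisson_process :: "'a measure \<Rightarrow> real \<Rightarrow> (real \<Rightarrow> 'a \<Rightarrow> nat) \<Rightarrow> bool" where
  "poisson_process M lam N \<longleftrightarrow>
     prob_space M \<and> 0 < lam \<and>
     (\<forall>t\<ge>0. N t \<in> measurable M (count_space UNIV)) \<and>
     (\<forall>\<omega>\<in>space M. N 0 \<omega> = 0
        \<and> (\<forall>s t. 0 \<le> s \<longrightarrow> s \<le> t \<longrightarrow> N s \<omega> \<le> N t \<omega>)
        \<and> (\<forall>t\<ge>0. \<exists>e>0. \<forall>s. t \<le> s \<longrightarrow> s < t + e \<longrightarrow> N s \<omega> = N t \<omega>)
        \<and> (\<forall>t>0. \<exists>e>0. \<forall>s. t - e < s \<longrightarrow> s < t \<longrightarrow> N t \<omega> \<le> N s \<omega> + 1)) \<and>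
     (\<forall>(n::nat) (t::nat \<Rightarrow> real). 0 \<le> t 0 \<longrightarrow> mono t \<longrightarrow>
        prob_space.indep_vars M (\<lambda>_. count_space UNIV) (\<lambda>i \<omega>. N (t (Suc i)) \<omega> - N (t i) \<omega>) {..<n}) \<and>
     (\<forall>s t. 0 \<le> s \<longrightarrow> s < t \<longrightarrow>
        distr M (count_space UNIV) (\<lambda>\<omega>. N t \<omega> - N s \<omega>) = measure_pmf (poisson_pmf (lam * (t - s))))"

definition arrival :: "(real \<Rightarrow> 'a \<Rightarrow> nat) \<Rightarrow> nat \<Rightarrow> 'a \<Rightarrow> real" where
  "arrival N i \<omega> = Inf {t. 0 \<le> t \<and> i \<le> N t \<omega>}"

definition nat_filt :: "'a measure \<Rightarrow> (real \<Rightarrow> 'a \<Rightarrow> nat) \<Rightarrow> real \<Rightarrow> 'a measure" where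
  "nat_filt M N t = sigma (space M) {N s -` A \<inter> space M | s A. 0 \<le> s \<and> s \<le> t}"

definition admissible :: "'a measure \<Rightarrow> (real \<Rightarrow> 'a \<Rightarrow> nat) \<Rightarrow> nat \<Rightarrow> (real \<Rightarrow> 'a \<Rightarrow> nat) set" where
  "admissible M N k = {\<xi>.
     (\<forall>t\<ge>0. \<xi> t \<in> measurable (nat_filt M N t) (count_space UNIV)) \<and>
     (\<forall>\<omega>\<in>space M. \<xi> 0 \<omega> = k) \<and>
     (\<forall>\<omega>\<in>space M. \<forall>s t. 0 \<le> s \<longrightarrow> s \<le> t \<longrightarrow> \<xi> t \<omega> \<le> \<xi> s \<omega>) \<and>
     (\<forall>\<omega>\<in>space M. \<forall>s t. 0 \<le> s \<longrightarrow> s \<le> t \<longrightarrow> N s \<omega> = N t \<omega> \<longrightarrow> \<xi> s \<omega> = \<xi> t \<omega>)}"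

definition cost :: "(real \<Rightarrow> real) \<Rightarrow> (real \<Rightarrow> 'a \<Rightarrow> nat) \<Rightarrow> real \<Rightarrow> (real \<Rightarrow> 'a \<Rightarrow> nat) \<Rightarrow> 'a \<Rightarrow> real" where
  "cost F N T \<xi> \<omega> =
     (\<Sum>i\<in>{i. 1 \<le> i \<and> arrival N i \<omega> \<le> T}.
        F (Lim (at_left (arrival N i \<omega>)) (\<lambda>s. real (\<xi> s \<omega>)) - real (\<xi> (arrival N i \<omega>) \<omega>)))
     + F (real (\<xi> T \<omega>))"

definition value_fn :: "'a measure \<Rightarrow> (real \<Rightarrow> 'a \<Rightarrow> nat) \<Rightarrow> (real \<Rightarrow> real) \<Rightarrow> nat \<Rightarrow> real \<Rightarrow> ennreal" where
  "value_fn M N F k T = (INF \<xi>\<in>admissible M N k. \<integral>\<^sup>+ \<omega>. ennreal (cost F N T \<xi> \<omega>) \<partial>M)"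

definition strictly_convex_on :: "real set \<Rightarrow> (real \<Rightarrow> real) \<Rightarrow> bool" where
  "strictly_convex_on S f \<longleftrightarrow> convex S \<and> (\<forall>x\<in>S. \<forall>y\<in>S. x \<noteq> y \<longrightarrow>
     (\<forall>u::real. 0 < u \<longrightarrow> u < 1 \<longrightarrow> f (u * x + (1 - u) * y) < u * f x + (1 - u) * f y))"

end

theory Submission
  imports Defs
begin

text \<open>Let \<open>\<xi>\<close> and \<open>\<eta>\<close> be strategies starting from \<open>k + 2\<close> and \<open>k\<close> shares. Rounding
  \<open>(\<xi> + \<eta>) / 2\<close> up and down gives two strategies starting from \<open>k + 1\<close>; at each arrival their
  trades have the same sum as those of \<open>\<xi>\<close> and \<open>\<eta>\<close> and lie between them, so by convexity of
  \<open>F\<close> their joint cost is pathwise at most that of \<open>\<xi>\<close> and \<open>\<eta>\<close>. Hence \<open>k \<mapsto> v(k,T)\<close> is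
  midpoint convex. It is finite, since never trading before \<open>T\<close> costs \<open>F k\<close>, and a midpoint
  convex real sequence lies below its chords, which is the claim.\<close>

section \<open>Counting paths\<close>

locale counting_path =
  fixes N :: "real \<Rightarrow> 'a \<Rightarrow> nat" and \<omega> :: 'a
  assumes N_zero: "N 0 \<omega> = 0"
    and N_mono: "0 \<le> s \<Longrightarrow> s \<le> t \<Longrightarrow> N s \<omega> \<le> N t \<omega>"
    and N_right_constant: "0 \<le> t \<Longrightarrow> \<exists>e>0. \<forall>s. t \<le> s \<longrightarrow> s < t + e \<longrightarrow> N s \<omega> = N t \<omega>"
    and N_left_jump_le_1: "0 < t \<Longrightarrow> \<exists>e>0. \<forall>s. t - e < s \<longrightarrow> s < t \<longrightarrow> N t \<omega> \<le> N s \<omega> + 1"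
    and N_unbounded: "\<exists>n::nat. i \<le> N (real n) \<omega>"
begin

lemma arrival_set_nonempty: "{t. 0 \<le> t \<and> i \<le> N t \<omega>} \<noteq> {}"
proof -
  obtain n :: nat where "i \<le> N (real n) \<omega>"
    using N_unbounded by blast
  then have "real n \<in> {t. 0 \<le> t \<and> i \<le> N t \<omega>}"
    by simp
  then show ?thesis
    by blast
qed

lemma arrival_nonneg: "0 \<le> arrival N i \<omega>"
  unfolding arrival_def by (rule cInf_greatest[OF arrival_set_nonempty]) auto

lemma arrival_le: "0 \<le> t \<Longrightarrow> i \<le> N t \<omega> \<Longrightarrow> arrival N i \<omega> \<le> t"
proof -
  have "bdd_below {t. 0 \<le> t \<and> i \<le> N t \<omega>}"
    by (rule bdd_belowI[of _ 0]) auto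
  then show "0 \<le> t \<Longrightarrow> i \<le> N t \<omega> \<Longrightarrow> arrival N i \<omega> \<le> t"
    unfolding arrival_def by (intro cInf_lower) auto
qed

lemma N_less_before_arrival: "0 \<le> t \<Longrightarrow> t < arrival N i \<omega> \<Longrightarrow> N t \<omega> < i"
  using arrival_le[of t i] by linarith

lemma le_N_arrival: "i \<le> N (arrival N i \<omega>) \<omega>"
proof (rule ccontr)
  let ?s = "arrival N i \<omega>"
  assume less: "\<not> i \<le> N ?s \<omega>"
  obtain e where e: "e > 0" "\<forall>s. ?s \<le> s \<longrightarrow> s < ?s + e \<longrightarrow> N s \<omega> = N ?s \<omega>"
    using N_right_constant[OF arrival_nonneg] by blast
  have "Inf {t. 0 \<le> t \<and> i \<le> N t \<omega>} < ?s + e"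
    using e(1) by (simp add: arrival_def)
  then obtain t where t: "0 \<le> t" "i \<le> N t \<omega>" "t < ?s + e"
    using cInf_lessD[OF arrival_set_nonempty] by blast
  then have "?s \<le> t"
    using arrival_le by blast
  then have "N t \<omega> = N ?s \<omega>"
    using e(2) t(3) by blast
  then show False
    using less t(2) by simp
qed

lemma arrival_pos:
  assumes "1 \<le> i"
  shows "0 < arrival N i \<omega>"
proof (rule ccontr)
  assume "\<not> 0 < arrival N i \<omega>"
  then have "arrival N i \<omega> = 0"
    using arrival_nonneg[of i] by linarith
  then show False
    using le_N_arrival[of i] N_zero assms by simp
qed

lemma N_arrival: "N (arrival N i \<omega>) \<omega> = i"
proof (cases "i = 0")
  case True
  then show ?thesis
    using arrival_le[of 0 0] arrival_nonneg[of 0] N_zero by simp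
next
  case False
  let ?s = "arrival N i \<omega>"
  have pos: "0 < ?s"
    using arrival_pos False by simp
  obtain e where e: "e > 0" "\<forall>s. ?s - e < s \<longrightarrow> s < ?s \<longrightarrow> N ?s \<omega> \<le> N s \<omega> + 1"
    using N_left_jump_le_1[OF pos] by blast
  define s where "s = ?s - min e ?s / 2"
  have "?s - e < s" "s < ?s" "0 \<le> s"
    using e(1) pos by (auto simp: s_def min_def)
  then have "N ?s \<omega> \<le> N s \<omega> + 1" "N s \<omega> < i"
    using e(2) N_less_before_arrival by auto
  then show ?thesis
    using le_N_arrival[of i] by simp
qed

lemma arrival_mono: "i \<le> j \<Longrightarrow> arrival N i \<omega> \<le> arrival N j \<omega>"
  using arrival_le[OF arrival_nonneg[of j], of i] N_arrival[of j] by simp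

lemma arrival_less_Suc: "arrival N i \<omega> < arrival N (Suc i) \<omega>"
proof -
  have "arrival N i \<omega> \<noteq> arrival N (Suc i) \<omega>"
    using N_arrival[of i] N_arrival[of "Suc i"] by auto
  then show ?thesis
    using arrival_mono[of i "Suc i"] by simp
qed

lemma N_eq_between_arrivals:
  assumes "arrival N i \<omega> \<le> t" "t < arrival N (Suc i) \<omega>"
  shows "N t \<omega> = i"
proof -
  have "0 \<le> t"
    using arrival_nonneg[of i] assms(1) by linarith
  then have "N t \<omega> < Suc i"
    by (rule N_less_before_arrival[OF _ assms(2)])
  moreover have "i \<le> N t \<omega>"
    using N_mono[OF arrival_nonneg assms(1)] N_arrival[of i] by simp
  ultimately show ?thesis
    by simp
qed

lemma arrival_le_iff: "0 \<le> T \<Longrightarrow> arrival N i \<omega> \<le> T \<longleftrightarrow> i \<le> N T \<omega>"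
  using arrival_le[of T i] N_mono[OF arrival_nonneg[of i], of T] N_arrival[of i] by auto

context
  fixes M :: "'a measure" and \<xi> :: "real \<Rightarrow> 'a \<Rightarrow> nat" and k :: nat
  assumes admissible: "\<xi> \<in> admissible M N k" and in_space: "\<omega> \<in> space M"
begin

lemma strategy_start: "\<xi> 0 \<omega> = k"
  using admissible in_space by (simp add: admissible_def)

lemma strategy_antimono: "0 \<le> s \<Longrightarrow> s \<le> t \<Longrightarrow> \<xi> t \<omega> \<le> \<xi> s \<omega>"
  using admissible in_space by (simp add: admissible_def)

lemma strategy_constant: "0 \<le> s \<Longrightarrow> s \<le> t \<Longrightarrow> N s \<omega> = N t \<omega> \<Longrightarrow> \<xi> s \<omega> = \<xi> t \<omega>"
  using admissible in_space by (simp add: admissible_def)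

lemma strategy_eq_between_arrivals:
  assumes "arrival N i \<omega> \<le> t" "t < arrival N (Suc i) \<omega>"
  shows "\<xi> t \<omega> = \<xi> (arrival N i \<omega>) \<omega>"
proof -
  have "N (arrival N i \<omega>) \<omega> = N t \<omega>"
    using N_eq_between_arrivals[OF assms] N_arrival[of i] by simp
  then show ?thesis
    using strategy_constant[OF arrival_nonneg assms(1)] by simp
qed

lemma strategy_arrival_antimono: "i \<le> j \<Longrightarrow> \<xi> (arrival N j \<omega>) \<omega> \<le> \<xi> (arrival N i \<omega>) \<omega>"
  using strategy_antimono[OF arrival_nonneg arrival_mono] by blast

lemma left_limit_strategy_at_arrival:
  assumes "1 \<le> i"
  shows "Lim (at_left (arrival N i \<omega>)) (\<lambda>s. real (\<xi> s \<omega>)) = real (\<xi> (arrival N (i - 1) \<omega>) \<omega>)"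
proof (rule tendsto_Lim)
  have i: "Suc (i - 1) = i"
    using assms by simp
  have "eventually (\<lambda>s. s \<in> {arrival N (i - 1) \<omega><..<arrival N i \<omega>}) (at_left (arrival N i \<omega>))"
    using eventually_at_left_real arrival_less_Suc[of "i - 1"] i by simp
  then have "eventually (\<lambda>s. real (\<xi> s \<omega>) = real (\<xi> (arrival N (i - 1) \<omega>) \<omega>)) (at_left (arrival N i \<omega>))"
  proof eventually_elim
    case (elim s)
    then show ?case
      using strategy_eq_between_arrivals[of "i - 1" s] i by simp
  qed
  then show "((\<lambda>s. real (\<xi> s \<omega>)) \<longlongrightarrow> real (\<xi> (arrival N (i - 1) \<omega>) \<omega>)) (at_left (arrival N i \<omega>))"
    by (rule tendsto_eventually)
qed simp

lemma cost_eq_sum_jumps: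
  assumes "0 \<le> T"
  shows "cost F N T \<xi> \<omega> =
    (\<Sum>i\<in>{1..N T \<omega>}. F (real (\<xi> (arrival N (i - 1) \<omega>) \<omega> - \<xi> (arrival N i \<omega>) \<omega>))) + F (real (\<xi> T \<omega>))"
proof -
  have arrivals: "{i. 1 \<le> i \<and> arrival N i \<omega> \<le> T} = {1..N T \<omega>}"
    using arrival_le_iff[OF assms] by (simp add: atLeastAtMost_def atLeast_def atMost_def Collect_conj_eq)
  show ?thesis
    unfolding cost_def arrivals
  proof (intro arg_cong2[where f="(+)"] refl sum.cong)
    fix i
    assume "i \<in> {1..N T \<omega>}"
    then have "1 \<le> i"
      by simp
    then show "F (Lim (at_left (arrival N i \<omega>)) (\<lambda>s. real (\<xi> s \<omega>)) - real (\<xi> (arrival N i \<omega>) \<omega>)) =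
        F (real (\<xi> (arrival N (i - 1) \<omega>) \<omega> - \<xi> (arrival N i \<omega>) \<omega>))"
      by (simp only: left_limit_strategy_at_arrival diff_le_self
          of_nat_diff[OF strategy_arrival_antimono[of "i - 1" i]])
  qed
qed

lemma cost_nonneg:
  assumes "0 \<le> T" and "\<forall>x\<ge>0. 0 \<le> F x"
  shows "0 \<le> cost F N T \<xi> \<omega>"
  unfolding cost_eq_sum_jumps[OF assms(1)] using assms(2) by (intro add_nonneg_nonneg sum_nonneg) auto

end

end

section \<open>Measurability\<close>

lemma measurable_compose_nat_pair:
  fixes f g :: "'a \<Rightarrow> nat"
  assumes f: "f \<in> M \<rightarrow>\<^sub>M count_space UNIV" and g: "g \<in> M \<rightarrow>\<^sub>M count_space UNIV"
    and \<phi>: "\<And>a b. \<phi> a b \<in> space K"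
  shows "(\<lambda>x. \<phi> (f x) (g x)) \<in> M \<rightarrow>\<^sub>M K"
proof -
  have "(\<lambda>x. \<phi> a (g x)) \<in> M \<rightarrow>\<^sub>M K" for a
    by (rule measurable_compose_countable'[where f="\<lambda>b x. \<phi> a b", OF measurable_const[OF \<phi>] g]) simp
  then show ?thesis
    by (rule measurable_compose_countable'[where f="\<lambda>a x. \<phi> a (g x)", OF _ f]) simp
qed

lemma measurable_card_Collect:
  fixes P :: "nat \<Rightarrow> 'a \<Rightarrow> bool"
  assumes "finite S" and P: "\<And>n. {\<omega>\<in>space M. P n \<omega>} \<in> sets M"
  shows "(\<lambda>\<omega>. card {n\<in>S. P n \<omega>}) \<in> M \<rightarrow>\<^sub>M count_space UNIV"
  using \<open>finite S\<close>
proof (induction S rule: finite_induct)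
  case empty
  then show ?case
    by simp
next
  case (insert a S)
  have "card {n\<in>insert a S. P n \<omega>} = (if P a \<omega> then 1 else 0) + card {n\<in>S. P n \<omega>}" for \<omega>
  proof (cases "P a \<omega>")
    case True
    then have "{n\<in>insert a S. P n \<omega>} = insert a {n\<in>S. P n \<omega>}"
      by blast
    then show ?thesis
      using True insert.hyps by simp
  next
    case False
    then have "{n\<in>insert a S. P n \<omega>} = {n\<in>S. P n \<omega>}"
      by blast
    then show ?thesis
      using False by simp
  qed
  moreover have "(\<lambda>\<omega>. if P a \<omega> then 1 else (0::nat)) \<in> M \<rightarrow>\<^sub>M count_space UNIV"
    by (rule measurable_If) (auto intro: P)
  ultimately show ?case
    using measurable_compose_nat_pair[OF _ insert.IH, where \<phi>="(+)"] by simp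
qed

lemma poisson_process_measurable:
  "poisson_process M lam N \<Longrightarrow> 0 \<le> t \<Longrightarrow> N t \<in> M \<rightarrow>\<^sub>M count_space UNIV"
  by (simp add: poisson_process_def)

lemma nat_filt_subalgebra:
  assumes "poisson_process M lam N"
  shows "subalgebra M (nat_filt M N t)"
proof -
  let ?G = "{N s -` A \<inter> space M | s A. 0 \<le> s \<and> s \<le> t}"
  have G: "?G \<subseteq> Pow (space M)"
    by auto
  have "?G \<subseteq> sets M"
    using measurable_sets[OF poisson_process_measurable[OF assms]] by auto
  then show ?thesis
    unfolding subalgebra_def nat_filt_def sets_measure_of[OF G] space_measure_of[OF G]
    using sets.sigma_sets_subset by blast
qed

lemma admissible_measurable:
  assumes "poisson_process M lam N" and "\<xi> \<in> admissible M N k" and "0 \<le> t"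
  shows "\<xi> t \<in> M \<rightarrow>\<^sub>M count_space UNIV"
  using assms(2,3) by (intro measurable_from_subalg[OF nat_filt_subalgebra[OF assms(1), of t]])
    (simp add: admissible_def)

section \<open>Almost every Poisson path is a counting path\<close>

lemma poisson_lower_tail_tendsto_zero:
  fixes lam :: real
  assumes "0 < lam"
  shows "(\<lambda>n::nat. \<Sum>j<i. (lam * real n) ^ j / fact j * exp (- (lam * real n))) \<longlonglongrightarrow> 0"
proof -
  have lim: "filterlim (\<lambda>n::nat. lam * real n) at_top sequentially"
    by (rule filterlim_tendsto_pos_mult_at_top[OF tendsto_const assms filterlim_real_sequentially])
  have "(\<lambda>n::nat. (lam * real n) ^ j / fact j * exp (- (lam * real n))) \<longlonglongrightarrow> 0" for j
  proof -
    have "(\<lambda>n::nat. (lam * real n) ^ j / exp (lam * real n)) \<longlonglongrightarrow> 0"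
      using filterlim_compose[OF tendsto_power_div_exp_0 lim] by simp
    then have "(\<lambda>n::nat. 1 / fact j * ((lam * real n) ^ j / exp (lam * real n))) \<longlonglongrightarrow> 1 / fact j * 0"
      by (rule tendsto_mult_left)
    moreover have "(\<lambda>n::nat. 1 / fact j * ((lam * real n) ^ j / exp (lam * real n)))
        = (\<lambda>n::nat. (lam * real n) ^ j / fact j * exp (- (lam * real n)))"
      by (simp add: exp_minus field_simps)
    ultimately show ?thesis
      by simp
  qed
  then have "(\<lambda>n::nat. \<Sum>j<i. (lam * real n) ^ j / fact j * exp (- (lam * real n))) \<longlonglongrightarrow> (\<Sum>j<i. 0)"
    by (intro tendsto_sum)
  then show ?thesis
    by simp
qed

lemma poisson_process_measure_less:
  assumes pp: "poisson_process M lam N" and "0 < t"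
  shows "measure M {\<omega>\<in>space M. N t \<omega> < i} = (\<Sum>j<i. (lam * t) ^ j / fact j * exp (- (lam * t)))"
proof -
  have incr: "(\<lambda>\<omega>. N t \<omega> - N 0 \<omega>) \<in> M \<rightarrow>\<^sub>M count_space UNIV"
    using \<open>0 < t\<close>
    by (intro measurable_compose_nat_pair[OF poisson_process_measurable[OF pp] poisson_process_measurable[OF pp],
          where \<phi>="(-)"]) simp_all
  have "(\<lambda>\<omega>. N t \<omega> - N 0 \<omega>) -` {..<i} \<inter> space M = {\<omega>\<in>space M. N t \<omega> < i}"
    using pp by (auto simp: poisson_process_def)
  then have "measure M {\<omega>\<in>space M. N t \<omega> < i}
      = measure (distr M (count_space UNIV) (\<lambda>\<omega>. N t \<omega> - N 0 \<omega>)) {..<i}"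
    using measure_distr[OF incr, of "{..<i}"] by simp
  also have "\<dots> = measure (measure_pmf (poisson_pmf (lam * (t - 0)))) {..<i}"
    using pp \<open>0 < t\<close> by (simp add: poisson_process_def)
  also have "\<dots> = (\<Sum>j<i. (lam * t) ^ j / fact j * exp (- (lam * t)))"
    using pp \<open>0 < t\<close> by (simp add: poisson_process_def measure_measure_pmf_finite)
  finally show ?thesis .
qed

lemma AE_unbounded_poisson_process:
  assumes pp: "poisson_process M lam N"
  shows "AE \<omega> in M. \<exists>n::nat. i \<le> N (real n) \<omega>"
proof -
  interpret prob_space M
    using pp by (simp add: poisson_process_def)
  have lam: "0 < lam"
    using pp by (simp add: poisson_process_def)
  have below: "{\<omega>\<in>space M. N (real n) \<omega> < i} \<in> sets M" for n :: nat
  proof -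
    have "{\<omega>\<in>space M. N (real n) \<omega> < i} = N (real n) -` {..<i} \<inter> space M"
      by auto
    then show ?thesis
      using measurable_sets[OF poisson_process_measurable[OF pp], of "real n" "{..<i}"] by simp
  qed
  define B where "B = {\<omega>\<in>space M. \<forall>n::nat. N (real n) \<omega> < i}"
  have B: "B \<in> sets M"
    unfolding B_def by (rule sets.sets_Collect_countable_All) (rule below)
  have "prob B \<le> (\<Sum>j<i. (lam * real n) ^ j / fact j * exp (- (lam * real n)))" if "1 \<le> n" for n :: nat
  proof -
    have "prob B \<le> prob {\<omega>\<in>space M. N (real n) \<omega> < i}"
      by (rule finite_measure_mono) (auto simp: B_def below)
    then show ?thesis
      using poisson_process_measure_less[OF pp, of "real n" i] that by simp
  qed
  then have "prob B \<le> 0"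
    using LIMSEQ_le_const[OF poisson_lower_tail_tendsto_zero[OF lam, of i]] by blast
  then have "B \<in> null_sets M"
    using B measure_nonneg[of M B] by (simp add: emeasure_eq_measure null_sets_def)
  then show ?thesis
    by (rule AE_I') (auto simp: B_def not_le)
qed

lemma AE_counting_path:
  assumes "poisson_process M lam N"
  shows "AE \<omega> in M. counting_path N \<omega>"
proof -
  have "AE \<omega> in M. \<forall>i. \<exists>n::nat. i \<le> N (real n) \<omega>"
    using AE_unbounded_poisson_process[OF assms] by (simp add: AE_all_countable)
  with AE_space show ?thesis
  proof eventually_elim
    case (elim \<omega>)
    then show ?case
      using assms unfolding counting_path_def poisson_process_def by blast
  qed
qed

section \<open>Rounded means of two strategies\<close>

lemma strictly_convex_on_imp_convex_on:
  assumes "strictly_convex_on S f"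
  shows "convex_on S f"
proof (rule convex_on_linorderI)
  show "convex S"
    using assms by (simp add: strictly_convex_on_def)
  fix t x y :: real
  assume "0 < t" "t < 1" "x \<in> S" "y \<in> S" "x < y"
  then have "\<And>u. 0 < u \<Longrightarrow> u < 1 \<Longrightarrow> f (u * x + (1 - u) * y) < u * f x + (1 - u) * f y"
    using assms unfolding strictly_convex_on_def by (simp add: less_imp_neq)
  from this[of "1 - t"] \<open>0 < t\<close> \<open>t < 1\<close> show "f ((1 - t) *\<^sub>R x + t *\<^sub>R y) \<le> (1 - t) * f x + t * f y"
    by simp
qed

lemma convex_on_add_le_endpoints:
  fixes f :: "real \<Rightarrow> real"
  assumes f: "convex_on {p..q} f" and u: "p \<le> u" "u \<le> q"
  shows "f u + f (p + q - u) \<le> f p + f q"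
proof (cases "p = q")
  case True
  then show ?thesis
    using u by simp
next
  case False
  then have "0 < q - p"
    using u by simp
  have "f u \<le> (f q - f p) / (q - p) * (u - p) + f p"
    using convex_onD_Icc'[OF f] u by simp
  moreover have "f (p + q - u) \<le> (f q - f p) / (q - p) * (q - u) + f p"
    using convex_onD_Icc'[OF f, of "p + q - u"] u by simp
  moreover have "(f q - f p) / (q - p) * (u - p) + (f q - f p) / (q - p) * (q - u)
      = (f q - f p) / (q - p) * (q - p)"
    unfolding distrib_left[symmetric] by simp
  moreover have "(f q - f p) / (q - p) * (q - p) = f q - f p"
    using \<open>0 < q - p\<close> by simp
  ultimately show ?thesis
    by linarith
qed

lemma convex_on_rounded_halves_le:
  fixes F :: "real \<Rightarrow> real" and x x' y y' :: nat
  assumes F: "convex_on {0..} F" and le: "x' \<le> x" "y' \<le> y"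
  shows "F (real ((x + y + 1) div 2 - (x' + y' + 1) div 2)) + F (real ((x + y) div 2 - (x' + y') div 2))
         \<le> F (real (x - x')) + F (real (y - y'))"
proof -
  define u where "u = (x + y + 1) div 2 - (x' + y' + 1) div 2"
  define w where "w = (x + y) div 2 - (x' + y') div 2"
  define p where "p = min (x - x') (y - y')"
  define q where "q = max (x - x') (y - y')"
  have halves: "(n + 1) div 2 + n div 2 = n" "(n + 1) div 2 \<le> n div 2 + 1" "n div 2 \<le> (n + 1) div 2"
    for n :: nat
    by presburger+
  have "(x' + y' + 1) div 2 \<le> (x + y + 1) div 2" "(x' + y') div 2 \<le> (x + y) div 2"
    using le by (simp_all add: div_le_mono)
  then have uw: "u + w = (x - x') + (y - y')" "u \<le> w + 1" "w \<le> u + 1"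
    using le halves[of "x + y"] halves[of "x' + y'"] unfolding u_def w_def by linarith+
  have pq: "p + q = (x - x') + (y - y')"
    by (simp add: p_def q_def)
  have "p \<le> u" "u \<le> q"
    using uw pq p_def q_def by linarith+
  then have "F (real u) + F (real p + real q - real u) \<le> F (real p) + F (real q)"
    by (intro convex_on_add_le_endpoints convex_on_subset[OF F]) auto
  moreover have "real p + real q - real u = real w"
    using uw pq by linarith
  moreover have "F (real p) + F (real q) = F (real (x - x')) + F (real (y - y'))"
    by (cases "x - x' \<le> y - y'") (simp_all add: p_def q_def)
  ultimately show ?thesis
    unfolding u_def w_def by simp
qed

definition rounded_mean ::
    "nat \<Rightarrow> (real \<Rightarrow> 'a \<Rightarrow> nat) \<Rightarrow> (real \<Rightarrow> 'a \<Rightarrow> nat) \<Rightarrow> real \<Rightarrow> 'a \<Rightarrow> nat" where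
  "rounded_mean c \<xi> \<eta> t \<omega> = (\<xi> t \<omega> + \<eta> t \<omega> + c) div 2"

lemma rounded_mean_admissible:
  assumes \<xi>: "\<xi> \<in> admissible M N k" and \<eta>: "\<eta> \<in> admissible M N l"
  shows "rounded_mean c \<xi> \<eta> \<in> admissible M N ((k + l + c) div 2)"
proof -
  have "rounded_mean c \<xi> \<eta> t \<in> nat_filt M N t \<rightarrow>\<^sub>M count_space UNIV" if "0 \<le> t" for t
    using \<xi> \<eta> that unfolding rounded_mean_def admissible_def
    by (intro measurable_compose_nat_pair[where \<phi>="\<lambda>a b. (a + b + c) div 2"]) auto
  moreover have "rounded_mean c \<xi> \<eta> t \<omega> \<le> rounded_mean c \<xi> \<eta> s \<omega>"
    if "\<omega> \<in> space M" "0 \<le> s" "s \<le> t" for \<omega> s t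
  proof -
    have "\<xi> t \<omega> \<le> \<xi> s \<omega>" "\<eta> t \<omega> \<le> \<eta> s \<omega>"
      using \<xi> \<eta> that by (simp_all add: admissible_def)
    then show ?thesis
      unfolding rounded_mean_def by (intro div_le_mono) simp
  qed
  moreover have "rounded_mean c \<xi> \<eta> s \<omega> = rounded_mean c \<xi> \<eta> t \<omega>"
    if "\<omega> \<in> space M" "0 \<le> s" "s \<le> t" "N s \<omega> = N t \<omega>" for \<omega> s t
  proof -
    have "\<xi> s \<omega> = \<xi> t \<omega>" "\<eta> s \<omega> = \<eta> t \<omega>"
      using \<xi> \<eta> that by (simp_all add: admissible_def)
    then show ?thesis
      unfolding rounded_mean_def by simp
  qed
  moreover have "rounded_mean c \<xi> \<eta> 0 \<omega> = (k + l + c) div 2" if "\<omega> \<in> space M" for \<omega>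
    using \<xi> \<eta> that by (simp add: admissible_def rounded_mean_def)
  ultimately show ?thesis
    unfolding admissible_def by blast
qed

lemma (in counting_path) cost_rounded_means_le:
  assumes \<xi>: "\<xi> \<in> admissible M N k" and \<eta>: "\<eta> \<in> admissible M N l"
    and "\<omega> \<in> space M" and "0 \<le> T" and F: "convex_on {0..} F"
  shows "cost F N T (rounded_mean 1 \<xi> \<eta>) \<omega> + cost F N T (rounded_mean 0 \<xi> \<eta>) \<omega>
    \<le> cost F N T \<xi> \<omega> + cost F N T \<eta> \<omega>"
proof -
  note cost_eq = cost_eq_sum_jumps[OF _ \<open>\<omega> \<in> space M\<close> \<open>0 \<le> T\<close>]
  define X where "X i = \<xi> (arrival N i \<omega>) \<omega>" for i
  define Y where "Y i = \<eta> (arrival N i \<omega>) \<omega>" for i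
  have XY: "X i \<le> X (i - 1)" "Y i \<le> Y (i - 1)" for i
    unfolding X_def Y_def
    using strategy_arrival_antimono[OF \<xi> \<open>\<omega> \<in> space M\<close>] strategy_arrival_antimono[OF \<eta> \<open>\<omega> \<in> space M\<close>]
    by auto
  have "cost F N T (rounded_mean 1 \<xi> \<eta>) \<omega> + cost F N T (rounded_mean 0 \<xi> \<eta>) \<omega>
     = (\<Sum>i\<in>{1..N T \<omega>}. F (real ((X (i - 1) + Y (i - 1) + 1) div 2 - (X i + Y i + 1) div 2))
          + F (real ((X (i - 1) + Y (i - 1)) div 2 - (X i + Y i) div 2)))
       + (F (real ((\<xi> T \<omega> + \<eta> T \<omega> + 1) div 2 - (0 + 0 + 1) div 2))
          + F (real ((\<xi> T \<omega> + \<eta> T \<omega>) div 2 - (0 + 0) div 2)))"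
    unfolding cost_eq[OF rounded_mean_admissible[OF \<xi> \<eta>]] sum.distrib
    by (simp add: rounded_mean_def X_def Y_def)
  also have "\<dots> \<le> (\<Sum>i\<in>{1..N T \<omega>}. F (real (X (i - 1) - X i)) + F (real (Y (i - 1) - Y i)))
       + (F (real (\<xi> T \<omega> - 0)) + F (real (\<eta> T \<omega> - 0)))"
    by (intro add_mono sum_mono convex_on_rounded_halves_le[OF F] XY) simp_all
  also have "\<dots> = cost F N T \<xi> \<omega> + cost F N T \<eta> \<omega>"
    unfolding cost_eq[OF \<xi>] cost_eq[OF \<eta>] sum.distrib by (simp add: X_def Y_def)
  finally show ?thesis .
qed

section \<open>A measurable version of the cost\<close>

text \<open>On counting paths this is \<open>\<xi>\<close> at the \<open>i\<close>-th arrival; going through rational times only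
  makes it evidently measurable.\<close>
definition strategy_at_arrival ::
    "(real \<Rightarrow> 'a \<Rightarrow> nat) \<Rightarrow> (real \<Rightarrow> 'a \<Rightarrow> nat) \<Rightarrow> nat \<Rightarrow> nat \<Rightarrow> 'a \<Rightarrow> nat" where
  "strategy_at_arrival N \<xi> k i \<omega> = card {n\<in>{1..k}. \<exists>q\<in>\<rat>. 0 \<le> q \<and> i \<le> N q \<omega> \<and> n \<le> \<xi> q \<omega>}"

lemma (in counting_path) strategy_at_arrival_eq:
  assumes adm: "\<xi> \<in> admissible M N k" and om: "\<omega> \<in> space M"
  shows "strategy_at_arrival N \<xi> k i \<omega> = \<xi> (arrival N i \<omega>) \<omega>"
proof -
  let ?x = "\<xi> (arrival N i \<omega>) \<omega>"
  have "{n\<in>{1..k}. \<exists>q\<in>\<rat>. 0 \<le> q \<and> i \<le> N q \<omega> \<and> n \<le> \<xi> q \<omega>} = {1..?x}"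
  proof (intro set_eqI iffI)
    fix n
    assume "n \<in> {n\<in>{1..k}. \<exists>q\<in>\<rat>. 0 \<le> q \<and> i \<le> N q \<omega> \<and> n \<le> \<xi> q \<omega>}"
    then obtain q where q: "1 \<le> n" "0 \<le> q" "i \<le> N q \<omega>" "n \<le> \<xi> q \<omega>"
      by auto
    then have "\<xi> q \<omega> \<le> ?x"
      using strategy_antimono[OF adm om arrival_nonneg arrival_le] by blast
    then show "n \<in> {1..?x}"
      using q by simp
  next
    fix n
    assume n: "n \<in> {1..?x}"
    obtain q where q: "q \<in> \<rat>" "arrival N i \<omega> < q" "q < arrival N (Suc i) \<omega>"
      using Rats_dense_in_real[OF arrival_less_Suc] by blast
    have "0 \<le> q"
      using arrival_nonneg[of i] q(2) by linarith
    moreover have "N q \<omega> = i" "\<xi> q \<omega> = ?x"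
      using N_eq_between_arrivals strategy_eq_between_arrivals[OF adm om] q(2,3) by auto
    moreover have "?x \<le> k"
      using strategy_antimono[OF adm om order.refl arrival_nonneg] strategy_start[OF adm om] by simp
    ultimately show "n \<in> {n\<in>{1..k}. \<exists>q\<in>\<rat>. 0 \<le> q \<and> i \<le> N q \<omega> \<and> n \<le> \<xi> q \<omega>}"
      using n q(1) by auto
  qed
  then show ?thesis
    unfolding strategy_at_arrival_def by simp
qed

lemma measurable_strategy_at_arrival:
  assumes pp: "poisson_process M lam N" and adm: "\<xi> \<in> admissible M N k"
  shows "strategy_at_arrival N \<xi> k i \<in> M \<rightarrow>\<^sub>M count_space UNIV"
  unfolding strategy_at_arrival_def
proof (rule measurable_card_Collect)
  fix n
  have "{\<omega>\<in>space M. \<exists>q\<in>\<rat>. 0 \<le> q \<and> i \<le> N q \<omega> \<and> n \<le> \<xi> q \<omega>}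
      = (\<Union>q\<in>\<rat> \<inter> {0..}. (N q -` {i..} \<inter> space M) \<inter> (\<xi> q -` {n..} \<inter> space M))"
    by auto
  also have "\<dots> \<in> sets M"
  proof (rule sets.countable_UN'')
    show "countable (\<rat> \<inter> {0..})"
      using countable_rat by (rule countable_subset[rotated]) auto
    fix q :: real
    assume "q \<in> \<rat> \<inter> {0..}"
    then show "(N q -` {i..} \<inter> space M) \<inter> (\<xi> q -` {n..} \<inter> space M) \<in> sets M"
      using measurable_sets[OF poisson_process_measurable[OF pp], of q "{i..}"]
        measurable_sets[OF admissible_measurable[OF pp adm], of q "{n..}"]
      by auto
  qed
  finally show "{\<omega>\<in>space M. \<exists>q\<in>\<rat>. 0 \<le> q \<and> i \<le> N q \<omega> \<and> n \<le> \<xi> q \<omega>} \<in> sets M" .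
qed simp

lemma cost_AE_eq_measurable:
  assumes pp: "poisson_process M lam N" and adm: "\<xi> \<in> admissible M N k" and T: "0 \<le> T"
  shows "\<exists>g\<in>borel_measurable M. AE \<omega> in M. ennreal (cost F N T \<xi> \<omega>) = g \<omega>"
proof -
  let ?X = "strategy_at_arrival N \<xi> k"
  define g where
    "g \<omega> = ennreal ((\<Sum>i\<in>{1..N T \<omega>}. F (real (?X (i - 1) \<omega> - ?X i \<omega>))) + F (real (\<xi> T \<omega>)))" for \<omega>
  have jump: "(\<lambda>\<omega>. F (real (?X (i - 1) \<omega> - ?X i \<omega>))) \<in> borel_measurable M" for i
    by (rule measurable_compose_nat_pair[OF measurable_strategy_at_arrival[OF pp adm]
          measurable_strategy_at_arrival[OF pp adm], where \<phi>="\<lambda>a b. F (real (a - b))"]) simp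
  have final: "(\<lambda>\<omega>. F (real (\<xi> T \<omega>))) \<in> borel_measurable M"
    by (rule measurable_compose_nat_pair[OF admissible_measurable[OF pp adm T] admissible_measurable[OF pp adm T],
          where \<phi>="\<lambda>a b. F (real a)"]) simp
  have "(\<lambda>\<omega>. ennreal ((\<Sum>i\<in>{1..n}. F (real (?X (i - 1) \<omega> - ?X i \<omega>))) + F (real (\<xi> T \<omega>))))
      \<in> borel_measurable M" for n
    by (intro measurable_compose[OF _ measurable_ennreal] borel_measurable_add borel_measurable_sum jump final)
  then have "g \<in> borel_measurable M"
    unfolding g_def by (rule measurable_compose_countable'[OF _ poisson_process_measurable[OF pp T]]) simp
  moreover have "AE \<omega> in M. ennreal (cost F N T \<xi> \<omega>) = g \<omega>"
    using AE_space AE_counting_path[OF pp]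
  proof eventually_elim
    case (elim \<omega>)
    then show ?case
      unfolding g_def counting_path.cost_eq_sum_jumps[OF elim(2) adm elim(1) T]
        counting_path.strategy_at_arrival_eq[OF elim(2) adm elim(1)] by simp
  qed
  ultimately show ?thesis
    by blast
qed

lemma nn_integral_cost_add:
  assumes pp: "poisson_process M lam N" and T: "0 \<le> T"
    and \<xi>: "\<xi> \<in> admissible M N k" and \<eta>: "\<eta> \<in> admissible M N l"
  shows "(\<integral>\<^sup>+\<omega>. ennreal (cost F N T \<xi> \<omega>) + ennreal (cost F N T \<eta> \<omega>) \<partial>M)
    = (\<integral>\<^sup>+\<omega>. ennreal (cost F N T \<xi> \<omega>) \<partial>M) + (\<integral>\<^sup>+\<omega>. ennreal (cost F N T \<eta> \<omega>) \<partial>M)"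
proof -
  obtain f where f: "f \<in> borel_measurable M" "AE \<omega> in M. ennreal (cost F N T \<xi> \<omega>) = f \<omega>"
    using cost_AE_eq_measurable[OF pp \<xi> T] by blast
  obtain g where g: "g \<in> borel_measurable M" "AE \<omega> in M. ennreal (cost F N T \<eta> \<omega>) = g \<omega>"
    using cost_AE_eq_measurable[OF pp \<eta> T] by blast
  have "(\<integral>\<^sup>+\<omega>. ennreal (cost F N T \<xi> \<omega>) + ennreal (cost F N T \<eta> \<omega>) \<partial>M) = (\<integral>\<^sup>+\<omega>. f \<omega> + g \<omega> \<partial>M)"
    using f(2) g(2) by (intro nn_integral_cong_AE) auto
  also have "\<dots> = (\<integral>\<^sup>+\<omega>. f \<omega> \<partial>M) + (\<integral>\<^sup>+\<omega>. g \<omega> \<partial>M)"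
    using f(1) g(1) by (rule nn_integral_add)
  also have "\<dots> = (\<integral>\<^sup>+\<omega>. ennreal (cost F N T \<xi> \<omega>) \<partial>M) + (\<integral>\<^sup>+\<omega>. ennreal (cost F N T \<eta> \<omega>) \<partial>M)"
    using f(2) g(2) by (intro arg_cong2[where f="(+)"] nn_integral_cong_AE) auto
  finally show ?thesis .
qed

section \<open>Midpoint convexity of the value function\<close>

lemma value_fn_le_F:
  assumes "poisson_process M lam N" and "F 0 = 0"
  shows "value_fn M N F k T \<le> ennreal (F (real k))"
proof -
  interpret prob_space M
    using assms(1) by (simp add: poisson_process_def)
  have "Lim (at_left x) (\<lambda>s. real k) = real k" for x :: real
    by (rule tendsto_Lim[OF trivial_limit_at_left_real tendsto_const])
  then have "cost F N T (\<lambda>t \<omega>. k) \<omega> = F (real k)" for \<omega>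
    unfolding cost_def using assms(2) by simp
  moreover have "(\<lambda>t \<omega>. k) \<in> admissible M N k"
    unfolding admissible_def by simp
  then have "value_fn M N F k T \<le> (\<integral>\<^sup>+ \<omega>. ennreal (cost F N T (\<lambda>t \<omega>. k) \<omega>) \<partial>M)"
    unfolding value_fn_def by (rule INF_lower)
  ultimately show ?thesis
    by (simp add: emeasure_space_1)
qed

lemma value_fn_approx:
  assumes "value_fn M N F k T < top" and "0 < e"
  obtains \<xi> where "\<xi> \<in> admissible M N k"
    and "(\<integral>\<^sup>+ \<omega>. ennreal (cost F N T \<xi> \<omega>) \<partial>M) < value_fn M N F k T + ennreal e"
proof -
  have "value_fn M N F k T + 0 < value_fn M N F k T + ennreal e"
    using assms by (subst ennreal_add_left_cancel_less) simp
  then show ?thesis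
    using that unfolding value_fn_def[of M N F k] by (auto simp: INF_less_iff)
qed

lemma value_fn_add_le_costs:
  assumes pp: "poisson_process M lam N" and T: "0 \<le> T" and F: "convex_on {0..} F"
    and Fnn: "\<forall>x\<ge>0. 0 \<le> F x"
    and \<xi>: "\<xi> \<in> admissible M N (Suc (Suc j))" and \<eta>: "\<eta> \<in> admissible M N j"
  shows "value_fn M N F (Suc j) T + value_fn M N F (Suc j) T
     \<le> (\<integral>\<^sup>+ \<omega>. ennreal (cost F N T \<xi> \<omega>) \<partial>M) + (\<integral>\<^sup>+ \<omega>. ennreal (cost F N T \<eta> \<omega>) \<partial>M)"
proof -
  let ?up = "rounded_mean 1 \<xi> \<eta>" and ?down = "rounded_mean 0 \<xi> \<eta>"
  have up: "?up \<in> admissible M N (Suc j)" and down: "?down \<in> admissible M N (Suc j)"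
    using rounded_mean_admissible[OF \<xi> \<eta>, of 1] rounded_mean_admissible[OF \<xi> \<eta>, of 0] by simp_all
  have "value_fn M N F (Suc j) T + value_fn M N F (Suc j) T
     \<le> (\<integral>\<^sup>+ \<omega>. ennreal (cost F N T ?up \<omega>) \<partial>M) + (\<integral>\<^sup>+ \<omega>. ennreal (cost F N T ?down \<omega>) \<partial>M)"
    unfolding value_fn_def by (intro add_mono INF_lower up down)
  also have "\<dots> = (\<integral>\<^sup>+ \<omega>. ennreal (cost F N T ?up \<omega>) + ennreal (cost F N T ?down \<omega>) \<partial>M)"
    by (rule nn_integral_cost_add[OF pp T up down, symmetric])
  also have "\<dots> \<le> (\<integral>\<^sup>+ \<omega>. ennreal (cost F N T \<xi> \<omega>) + ennreal (cost F N T \<eta> \<omega>) \<partial>M)"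
  proof (rule nn_integral_mono_AE)
    show "AE \<omega> in M. ennreal (cost F N T ?up \<omega>) + ennreal (cost F N T ?down \<omega>)
        \<le> ennreal (cost F N T \<xi> \<omega>) + ennreal (cost F N T \<eta> \<omega>)"
      using AE_space AE_counting_path[OF pp]
    proof eventually_elim
      case (elim \<omega>)
      interpret counting_path N \<omega>
        by (fact elim(2))
      show ?case
        using cost_rounded_means_le[OF \<xi> \<eta> elim(1) T F]
          cost_nonneg[OF up elim(1) T Fnn] cost_nonneg[OF down elim(1) T Fnn]
          cost_nonneg[OF \<xi> elim(1) T Fnn] cost_nonneg[OF \<eta> elim(1) T Fnn]
        by (simp flip: ennreal_plus add: ennreal_leI)
    qed
  qed
  also have "\<dots> = (\<integral>\<^sup>+ \<omega>. ennreal (cost F N T \<xi> \<omega>) \<partial>M) + (\<integral>\<^sup>+ \<omega>. ennreal (cost F N T \<eta> \<omega>) \<partial>M)"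
    by (rule nn_integral_cost_add[OF pp T \<xi> \<eta>])
  finally show ?thesis .
qed

lemma value_fn_midpoint_convex:
  assumes pp: "poisson_process M lam N" and T: "0 \<le> T" and F: "convex_on {0..} F"
    and Fnn: "\<forall>x\<ge>0. 0 \<le> F x"
  shows "value_fn M N F (Suc j) T + value_fn M N F (Suc j) T
     \<le> value_fn M N F (Suc (Suc j)) T + value_fn M N F j T"
proof (rule ennreal_le_epsilon)
  fix e :: real
  assume fin: "value_fn M N F (Suc (Suc j)) T + value_fn M N F j T < top" and "0 < e"
  then have "0 < e / 2"
    by simp
  have "value_fn M N F (Suc (Suc j)) T < top" "value_fn M N F j T < top"
    using fin by (auto simp: top_unique)
  obtain \<xi> where \<xi>: "\<xi> \<in> admissible M N (Suc (Suc j))"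
    and "(\<integral>\<^sup>+ \<omega>. ennreal (cost F N T \<xi> \<omega>) \<partial>M) < value_fn M N F (Suc (Suc j)) T + ennreal (e / 2)"
    by (rule value_fn_approx[OF \<open>value_fn M N F (Suc (Suc j)) T < top\<close> \<open>0 < e / 2\<close>])
  moreover obtain \<eta> where \<eta>: "\<eta> \<in> admissible M N j"
    and "(\<integral>\<^sup>+ \<omega>. ennreal (cost F N T \<eta> \<omega>) \<partial>M) < value_fn M N F j T + ennreal (e / 2)"
    by (rule value_fn_approx[OF \<open>value_fn M N F j T < top\<close> \<open>0 < e / 2\<close>])
  ultimately have "value_fn M N F (Suc j) T + value_fn M N F (Suc j) T
      \<le> (value_fn M N F (Suc (Suc j)) T + ennreal (e / 2)) + (value_fn M N F j T + ennreal (e / 2))"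
    using value_fn_add_le_costs[OF pp T F Fnn \<xi> \<eta>] by (meson add_mono less_imp_le order_trans)
  also have "\<dots> = value_fn M N F (Suc (Suc j)) T + value_fn M N F j T + ennreal e"
    using \<open>0 < e\<close> by (simp add: add_ac flip: ennreal_plus)
  finally show "value_fn M N F (Suc j) T + value_fn M N F (Suc j) T
      \<le> value_fn M N F (Suc (Suc j)) T + value_fn M N F j T + ennreal e" .
qed

section \<open>Midpoint convex sequences\<close>

lemma midpoint_convex_slope_le:
  fixes w :: "nat \<Rightarrow> real"
  assumes mid: "\<And>j. w (Suc j) + w (Suc j) \<le> w (Suc (Suc j)) + w j" and "i \<le> m"
  shows "w m - w i \<le> real (m - i) * (w (Suc m) - w m)"
  using \<open>i \<le> m\<close>
proof (induction m rule: dec_induct)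
  case base
  then show ?case
    by simp
next
  case (step m)
  have "w (Suc m) - w i = (w (Suc m) - w m) + (w m - w i)"
    by simp
  also have "\<dots> \<le> real (Suc m - i) * (w (Suc m) - w m)"
    using step by (simp add: Suc_diff_le algebra_simps)
  also have "\<dots> \<le> real (Suc m - i) * (w (Suc (Suc m)) - w (Suc m))"
    using mid[of m] by (intro mult_left_mono) simp_all
  finally show ?case .
qed

lemma midpoint_convex_interpolation:
  fixes w :: "nat \<Rightarrow> real"
  assumes mid: "\<And>j. w (Suc j) + w (Suc j) \<le> w (Suc (Suc j)) + w j" and "i < n"
  shows "w (n - 1) \<le> 1 / real (n - i) * w i + (1 - 1 / real (n - i)) * w n"
proof -
  define d where "d = real (n - i)"
  have "0 < d"
    using \<open>i < n\<close> by (simp add: d_def)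
  have "real (n - 1 - i) = d - 1"
    using \<open>i < n\<close> by (simp add: d_def)
  moreover have "w (n - 1) - w i \<le> real (n - 1 - i) * (w n - w (n - 1))"
    using midpoint_convex_slope_le[of w, OF mid, of i "n - 1"] \<open>i < n\<close> by simp
  ultimately have "w (n - 1) - w i \<le> (d - 1) * (w n - w (n - 1))"
    by (simp only:)
  then have "w (n - 1) * d \<le> w i + (d - 1) * w n"
    by (simp add: algebra_simps)
  then have "w (n - 1) \<le> (w i + (d - 1) * w n) / d"
    using \<open>0 < d\<close> by (simp add: pos_le_divide_eq)
  also have "\<dots> = 1 / d * w i + (1 - 1 / d) * w n"
    using \<open>0 < d\<close> by (simp add: field_simps)
  finally show ?thesis
    unfolding d_def .
qed

lemma ennreal_midpoint_convex_interpolation: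
  fixes v :: "nat \<Rightarrow> ennreal"
  assumes fin: "\<And>j. v j < top" and mid: "\<And>j. v (Suc j) + v (Suc j) \<le> v (Suc (Suc j)) + v j"
    and "i < n"
  shows "v (n - 1) \<le> ennreal (1 / real (n - i)) * v i + ennreal (1 - 1 / real (n - i)) * v n"
proof -
  define w where "w j = enn2real (v j)" for j
  define c where "c = 1 / real (n - i)"
  have v: "v j = ennreal (w j)" and w: "0 \<le> w j" for j
    using fin[of j] by (simp_all add: w_def ennreal_enn2real_if less_top)
  have c: "0 \<le> c" "0 \<le> 1 - c"
    using \<open>i < n\<close> by (simp_all add: c_def)
  have "w (Suc j) + w (Suc j) \<le> w (Suc (Suc j)) + w j" for j
    using mid[of j] w[of j] w[of "Suc j"] w[of "Suc (Suc j)"] unfolding v by (simp flip: ennreal_plus)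
  then have "ennreal (w (n - 1)) \<le> ennreal (c * w i + (1 - c) * w n)"
    unfolding c_def using midpoint_convex_interpolation \<open>i < n\<close> by (intro ennreal_leI) blast
  also have "\<dots> = ennreal c * ennreal (w i) + ennreal (1 - c) * ennreal (w n)"
    using c w by (simp add: ennreal_plus ennreal_mult)
  finally show ?thesis
    unfolding v c_def .
qed

theorem corollary2p8:
  fixes M :: "'a measure" and N :: "real \<Rightarrow> 'a \<Rightarrow> nat" and lam :: real
    and F :: "real \<Rightarrow> real" and T :: real and a k b :: nat
  assumes "poisson_process M lam N" and "0 < lam"
    and "\<forall>x\<ge>0. 0 \<le> F x"
    and "strict_mono_on {0..} F" and "strictly_convex_on {0..} F" and "F 0 = 0"
    and "0 \<le> T" and "a < k" and "0 < b" and "a < b" and "b \<le> k"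
  shows "value_fn M N F (k - a - 1) T
           \<le> ennreal (1 / real (b - a)) * value_fn M N F (k - b) T
             + ennreal (1 - 1 / real (b - a)) * value_fn M N F (k - a) T"
proof -
  let ?v = "\<lambda>j. value_fn M N F j T"
  have "?v j < top" for j
    using value_fn_le_F[of M lam N F, OF assms(1,6)] by (rule le_less_trans) simp
  moreover have "?v (Suc j) + ?v (Suc j) \<le> ?v (Suc (Suc j)) + ?v j" for j
    using value_fn_midpoint_convex[OF assms(1,7) strictly_convex_on_imp_convex_on[OF assms(5)] assms(3)] .
  moreover have "k - b < k - a" and "(k - a) - (k - b) = b - a"
    using assms by simp_all
  ultimately show ?thesis
    using ennreal_midpoint_convex_interpolation[where v="?v" and i="k - b" and n="k - a"] by simp
qed

end
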